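(* Let $\mathcal L^{(\alpha_H)}_n$ and $\mathcal L_n$ be the sum-level sets of the alternating and the classical Lüroth maps, as in the context. Then, as $n\to\infty$: (1) $\displaystyle\sum_{k=1}^n\lambda(\mathcal L_k)=\sum_{k=1}^n\lambda(\mathcal L^{(\alpha_H)}_k)\sim n\Big(\sum_{k=1}^n\frac1k\Big)^{-1}\sim\frac{n}{\log n}$; (2) $\displaystyle\lambda(\mathcal L_n)=\lambda(\mathcal L^{(\alpha_H)}_n)\sim\Big(\sum_{k=1}^n\frac1k\Big)^{-1}\sim\frac1{\log n}$.
   Context: $\lambda$ is Lebesgue measure on $\mathcal U=[0,1]$. The harmonic partition $\alpha_H=\{A_n\}$ has $A_n=(1/(n+1),1/n]$. The alternating Lüroth map is $L_{\alpha_H}(x)=-n(n+1)x+(n+1)$ for $x\in A_n$, $L_{\alpha_H}(0)=0$; its cylinders are $C(\ell_1,\dots,\ell_k)=\{x:L_{\alpha_H}^{i-1}(x)\in A_{\ell_i},\ i=1,\dots,k\}$ and $\mathcal L^{(\alpha_H)}_n$ is the union of all $C(\ell_1,\dots,\ell_k)$, $k\in\mathbb N$, with $\sum_i\ell_i=n$. The classical Lüroth map is $L(x)=n(n+1)x-n$ for $x\in[1/(n+1),1/n)$, $n\ge2$, $L(x)=2x-1$ for $x\in[1/2,1]$, $L(0)=0$; with digit intervals $B_1=[1/2,1]$, $B_n=[1/(n+1),1/n)$ for $n\ge2$, its cylinders are $\{x:L^{i-1}(x)\in B_{\ell_i},\ i=1,\dots,k\}$ and $\mathcal L_n$ is the union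 of those cylinders with $\sum_i\ell_i=n$. $a_n\sim b_n$ means $a_n/b_n\to1$. *)

theory Defs
  imports "HOL-Analysis.Analysis" "HOL-Library.Landau_Symbols"
begin

definition harmA :: "nat \<Rightarrow> real set" where
  "harmA n = {1 / real (n + 1) <.. 1 / real n}"

definition alt_digit :: "real \<Rightarrow> nat" where
  "alt_digit x = (THE n. n \<ge> 1 \<and> x \<in> harmA n)"

definition alt_luroth :: "real \<Rightarrow> real" where
  "alt_luroth x = (if x = 0 then 0 else
     - real (alt_digit x) * real (alt_digit x + 1) * x + real (alt_digit x + 1))"

definition lurB :: "nat \<Rightarrow> real set" where
  "lurB n = (if n = 1 then {1/2 .. 1} else {1 / real (n + 1) ..< 1 / real n})"

definition lur_digit :: "real \<Rightarrow> nat" where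
  "lur_digit x = (THE n. n \<ge> 1 \<and> x \<in> lurB n)"

definition luroth :: "real \<Rightarrow> real" where
  "luroth x = (if x = 0 then 0 else
     real (lur_digit x) * real (lur_digit x + 1) * x - real (lur_digit x))"

definition cyl :: "(real \<Rightarrow> real) \<Rightarrow> (nat \<Rightarrow> real set) \<Rightarrow> nat list \<Rightarrow> real set" where
  "cyl T D ls = {x \<in> {0..1}. \<forall>i < length ls. (T ^^ i) x \<in> D (ls ! i)}"

definition sum_level :: "(real \<Rightarrow> real) \<Rightarrow> (nat \<Rightarrow> real set) \<Rightarrow> nat \<Rightarrow> real set" where
  "sum_level T D n =
     (\<Union> ls \<in> {ls. ls \<noteq> [] \<and> (\<forall>l \<in> set ls. l \<ge> 1) \<and> sum_list ls = n}. cyl T D ls)"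

abbreviation alt_level :: "nat \<Rightarrow> real set" where
  "alt_level n \<equiv> sum_level alt_luroth harmA n"

abbreviation lur_level :: "nat \<Rightarrow> real set" where
  "lur_level n \<equiv> sum_level luroth lurB n"

end

theory Submission
  imports Defs "HOL-Real_Asymp.Real_Asymp"
begin

text \<open>
  Every branch of either map is an affine bijection of the harmonic interval [1/(j+1), 1/j] onto
  [0,1] (up to endpoints), so a digit-l cylinder shrinks Lebesgue measure by the factor 1/(l(l+1)).
  Hence the measures w_n of the sum-level sets, with w_0 = 1, satisfy the renewal recursion
  w_n = sum_{l=1..n} w_{n-l} / (l(l+1)), which only sees the partition: both maps give the same w.
  Telescoping 1/(l(l+1)) = 1/l - 1/(l+1) turns the recursion into sum_{j<=n} w_j / (n-j+1) = 1,
  and Kaluza's theorem for the log-convex sequence 1/(n+1) shows that w is nonincreasing.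
  Monotonicity gives w_n H_{n+1} <= 1, and splitting the same identity at k and k s with s ~ ln k
  gives the matching lower bound, so w_n H_n --> 1. Stolz-Cesaro transfers this to the partial
  sums, and H_n ~ ln n.
\<close>

section \<open>Sum-level sets of maps with affine branches on the harmonic intervals\<close>

lemma measure_lborel_affine_preimage:
  fixes A :: "real set"
  assumes "A \<in> sets borel" and "c \<noteq> 0"
  shows "measure lborel {x. t + c * x \<in> A} = measure lborel A / \<bar>c\<bar>"
proof -
  have "emeasure lborel A = emeasure (density (distr lborel borel (\<lambda>x. t + c * x)) (\<lambda>_. \<bar>c\<bar>)) A"
    using lborel_real_affine[OF \<open>c \<noteq> 0\<close>, of t] by simp
  also have "\<dots> = ennreal \<bar>c\<bar> * emeasure lborel {x. t + c * x \<in> A}"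
    using assms(1) by (simp add: emeasure_density nn_integral_cmult_indicator emeasure_distr vimage_def)
  finally have "measure lborel A = \<bar>c\<bar> * measure lborel {x. t + c * x \<in> A}"
    by (simp add: measure_def enn2real_mult)
  then show ?thesis using \<open>c \<noteq> 0\<close> by simp
qed

lemma cyl_Cons:
  assumes "\<And>x. x \<in> D l \<Longrightarrow> x \<in> {0..1} \<Longrightarrow> T x \<in> {0..1}"
  shows "cyl T D (l # ls) = {x \<in> {0..1}. x \<in> D l \<and> T x \<in> cyl T D ls}"
  using assms by (auto simp: cyl_def funpow_swap1 less_Suc_eq_0_disj)

definition compositions :: "nat \<Rightarrow> nat list set" where
  "compositions n = {ls. (\<forall>l \<in> set ls. l \<ge> 1) \<and> sum_list ls = n}"

lemma compositions_0: "compositions 0 = {[]}"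
proof -
  have "ls = []" if "\<forall>l \<in> set ls. l \<ge> 1" "sum_list ls = 0" for ls :: "nat list"
    using that by (cases ls) auto
  then show ?thesis by (auto simp: compositions_def)
qed

lemma compositions_Cons:
  assumes "n \<ge> 1"
  shows "compositions n = (\<Union>l \<in> {1..n}. (#) l ` compositions (n - l))"
proof -
  have "\<exists>l r. ls = l # r" if "sum_list ls = n" for ls :: "nat list"
    using that assms by (cases ls) auto
  then show ?thesis using assms by (fastforce simp: compositions_def image_iff)
qed

text \<open>The empty digit string is admitted at level 0, so that the recursion holds from n = 1 on.\<close>

definition ext_sum_level :: "(real \<Rightarrow> real) \<Rightarrow> (nat \<Rightarrow> real set) \<Rightarrow> nat \<Rightarrow> real set" where
  "ext_sum_level T D n = (if n = 0 then {0..1} else sum_level T D n)"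

lemma ext_sum_level_eq: "ext_sum_level T D n = (\<Union>ls \<in> compositions n. cyl T D ls)"
proof (cases "n = 0")
  case True
  then show ?thesis by (auto simp: ext_sum_level_def compositions_0 cyl_def)
next
  case False
  then have "compositions n = {ls. ls \<noteq> [] \<and> (\<forall>l \<in> set ls. l \<ge> 1) \<and> sum_list ls = n}"
    by (auto simp: compositions_def)
  then show ?thesis using False by (simp add: ext_sum_level_def sum_level_def)
qed

lemma ext_sum_level_Cons:
  assumes maps: "\<And>l x. l \<ge> 1 \<Longrightarrow> x \<in> D l \<Longrightarrow> x \<in> {0..1} \<Longrightarrow> T x \<in> {0..1}"
    and "n \<ge> 1"
  shows "ext_sum_level T D n
       = (\<Union>l \<in> {1..n}. {x \<in> {0..1}. x \<in> D l \<and> T x \<in> ext_sum_level T D (n - l)})"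
proof -
  have "(\<Union>ls \<in> compositions (n - l). cyl T D (l # ls))
      = {x \<in> {0..1}. x \<in> D l \<and> T x \<in> ext_sum_level T D (n - l)}" if "l \<ge> 1" for l
    using cyl_Cons[of D l T] maps[OF that] by (auto simp: ext_sum_level_eq)
  then show ?thesis
    by (simp add: ext_sum_level_eq[of T D n] compositions_Cons[OF \<open>n \<ge> 1\<close>])
qed

lemma ext_sum_level_subset: "ext_sum_level T D n \<subseteq> {0..1}"
  by (auto simp: ext_sum_level_eq cyl_def)

lemma sum_level_0: "sum_level T D 0 = {}"
  using compositions_0 by (auto simp: sum_level_def compositions_def)

lemma measure_sum_level:
  "measure lborel (sum_level T D n) = (if n = 0 then 0 else measure lborel (ext_sum_level T D n))"
  by (simp add: ext_sum_level_def sum_level_0)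

definition harm_interval :: "nat \<Rightarrow> real set" where
  "harm_interval j = {1 / real (j + 1) .. 1 / real j}"

locale harmonic_lueroth =
  fixes T :: "real \<Rightarrow> real" and D :: "nat \<Rightarrow> real set"
  assumes digit_subset: "j \<ge> 1 \<Longrightarrow> D j \<subseteq> harm_interval j"
    and digit_endpoints: "j \<ge> 1 \<Longrightarrow> harm_interval j - D j \<subseteq> {1 / real (j + 1), 1 / real j}"
    and digit_disjoint: "i \<ge> 1 \<Longrightarrow> j \<ge> 1 \<Longrightarrow> i \<noteq> j \<Longrightarrow> D i \<inter> D j = {}"
    and affine_branch: "j \<ge> 1 \<Longrightarrow> \<exists>a b. \<bar>a\<bar> = real j * real (j + 1)
          \<and> (\<forall>x \<in> D j. T x = b + a * x) \<and> {x. b + a * x \<in> {0..1}} = harm_interval j"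
begin

lemma digit_subset_unit: "j \<ge> 1 \<Longrightarrow> D j \<subseteq> {0..1}"
proof -
  assume "j \<ge> 1"
  then have "harm_interval j \<subseteq> {0..1}"
    by (auto simp: harm_interval_def intro: order_trans[of _ "1 / real j"] order_trans[of _ "1 / (real j + 1)"])
  then show ?thesis using digit_subset[OF \<open>j \<ge> 1\<close>] by blast
qed

lemma digit_sets_cofinite: "j \<ge> 1 \<Longrightarrow> finite (harm_interval j - D j)"
  using digit_endpoints by (rule finite_subset) auto

lemma digit_sets_borel: "j \<ge> 1 \<Longrightarrow> D j \<in> sets borel"
proof -
  assume j: "j \<ge> 1"
  have "finite (harm_interval j - D j)" using digit_sets_cofinite[OF j] .
  moreover have "D j = harm_interval j - (harm_interval j - D j)"
    using digit_subset[OF j] by blast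
  ultimately show ?thesis
    by (metis borel_closed closed_atLeastAtMost finite_imp_closed harm_interval_def sets.Diff)
qed

lemma branch_maps_unit:
  assumes "j \<ge> 1" and "x \<in> D j"
  shows "T x \<in> {0..1}"
proof -
  obtain a b where T: "\<forall>x \<in> D j. T x = b + a * x" and "{x. b + a * x \<in> {0..1}} = harm_interval j"
    using affine_branch[OF assms(1)] by blast
  moreover have "x \<in> harm_interval j" using assms digit_subset by blast
  ultimately show ?thesis using T assms(2) by force
qed

lemma branch_preimage:
  assumes j: "j \<ge> 1" and A: "A \<in> sets borel" "A \<subseteq> {0..1}"
  shows "{x \<in> {0..1}. x \<in> D j \<and> T x \<in> A} \<in> sets borel"
    and "measure lborel {x \<in> {0..1}. x \<in> D j \<and> T x \<in> A} = measure lborel A / (real j * real (j + 1))"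
proof -
  obtain a b where a: "\<bar>a\<bar> = real j * real (j + 1)" and T: "\<forall>x \<in> D j. T x = b + a * x"
    and onto: "{x. b + a * x \<in> {0..1}} = harm_interval j"
    using affine_branch[OF j] by blast
  define Q where "Q = {x. b + a * x \<in> A}"
  have Q: "Q \<in> sets borel" unfolding Q_def using A(1) by measurable
  have P: "{x \<in> {0..1}. x \<in> D j \<and> T x \<in> A} = D j \<inter> Q"
    using T digit_subset_unit[OF j] by (auto simp: Q_def)
  have D: "D j \<in> sets borel" using digit_sets_borel[OF j] .
  show "{x \<in> {0..1}. x \<in> D j \<and> T x \<in> A} \<in> sets borel"
    unfolding P using D Q by simp
  have "Q - D j \<subseteq> harm_interval j - D j"
    using onto A(2) unfolding Q_def by blast
  then have "Q - D j \<in> null_sets lborel"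
    using Q D by (intro null_sets_subset[OF finite_imp_null_set_lborel[OF digit_sets_cofinite[OF j]]]) auto
  then have "measure lborel (D j \<inter> Q) = measure lborel Q"
    using measure_Un_null_set[of "D j \<inter> Q" lborel "Q - D j"] D Q
    by (metis Int_commute Un_Diff_Int sets.Int sets_lborel sup_commute)
  also have "\<dots> = measure lborel A / (real j * real (j + 1))"
  proof -
    have "a \<noteq> 0" using a j by auto
    then show ?thesis using measure_lborel_affine_preimage[OF A(1), of a b] a by (simp add: Q_def)
  qed
  finally show "measure lborel {x \<in> {0..1}. x \<in> D j \<and> T x \<in> A} = measure lborel A / (real j * real (j + 1))"
    unfolding P .
qed

lemma ext_sum_level_decomp:
  "n \<ge> 1 \<Longrightarrow> ext_sum_level T D n
     = (\<Union>l \<in> {1..n}. {x \<in> {0..1}. x \<in> D l \<and> T x \<in> ext_sum_level T D (n - l)})"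
  by (rule ext_sum_level_Cons) (blast intro: branch_maps_unit)+

lemma ext_sum_level_borel: "ext_sum_level T D n \<in> sets borel"
proof (induction n rule: less_induct)
  case (less n)
  show ?case
  proof (cases "n = 0")
    case True
    then show ?thesis by (simp add: ext_sum_level_def)
  next
    case False
    have "{x \<in> {0..1}. x \<in> D l \<and> T x \<in> ext_sum_level T D (n - l)} \<in> sets borel" if "l \<in> {1..n}" for l
      using that less.IH[of "n - l"] by (intro branch_preimage(1) ext_sum_level_subset) auto
    then show ?thesis using False by (auto simp: ext_sum_level_decomp)
  qed
qed

lemma measure_ext_sum_level:
  assumes "n \<ge> 1"
  shows "measure lborel (ext_sum_level T D n)
       = (\<Sum>l=1..n. measure lborel (ext_sum_level T D (n - l)) / (real l * real (l + 1)))"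
proof -
  define F where "F l = {x \<in> {0..1}. x \<in> D l \<and> T x \<in> ext_sum_level T D (n - l)}" for l
  have F_borel: "F l \<in> sets borel" if "l \<in> {1..n}" for l
    unfolding F_def using that by (intro branch_preimage(1) ext_sum_level_borel ext_sum_level_subset) auto
  have F_measure: "measure lborel (F l) = measure lborel (ext_sum_level T D (n - l)) / (real l * real (l + 1))"
    if "l \<in> {1..n}" for l
    unfolding F_def using that by (intro branch_preimage(2) ext_sum_level_borel ext_sum_level_subset) auto
  have "disjoint_family_on F {1..n}"
    unfolding disjoint_family_on_def
  proof (intro ballI impI)
    fix i k assume "i \<in> {1..n}" "k \<in> {1..n}" "i \<noteq> k"
    then have "D i \<inter> D k = {}" using digit_disjoint by simp
    then show "F i \<inter> F k = {}" unfolding F_def by blast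
  qed
  moreover have "emeasure lborel (F l) \<noteq> \<infinity>" for l
  proof -
    have "emeasure lborel (F l) \<le> emeasure lborel {0..1::real}"
      by (intro emeasure_mono) (auto simp: F_def)
    then show ?thesis by (auto simp: top_unique)
  qed
  ultimately have "measure lborel (\<Union>l \<in> {1..n}. F l) = (\<Sum>l=1..n. measure lborel (F l))"
    using F_borel by (intro measure_finite_Union) auto
  moreover have "ext_sum_level T D n = (\<Union>l \<in> {1..n}. F l)"
    unfolding F_def by (rule ext_sum_level_decomp[OF assms])
  ultimately show ?thesis using F_measure by simp
qed

end

section \<open>Renewal sequences with weights 1/(l(l+1))\<close>

text \<open>
  Kaluza's theorem in convolution form: the reciprocal of a power series with positive
  log-convex coefficients has nonpositive coefficients after the constant term.
\<close>

lemma kaluza: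
  fixes a c :: "nat \<Rightarrow> real"
  assumes a_pos: "\<And>n. a n > 0"
    and log_convex: "incseq (\<lambda>n. a (Suc n) / a n)"
    and c_0: "c 0 \<ge> 0"
    and convolution: "\<And>k. k \<ge> 1 \<Longrightarrow> (\<Sum>j\<le>k. c j * a (k - j)) = 0"
  shows "k \<ge> 1 \<Longrightarrow> c k \<le> 0"
proof (induction k rule: less_induct)
  case (less k)
  then obtain m where k: "k = Suc m" by (cases k) auto
  have "c (Suc m) * a 0 \<le> 0"
  proof (cases "m = 0")
    case True
    then have "c (Suc m) * a 0 = - c 0 * a 1" using convolution[of 1] by simp
    then show ?thesis using c_0 a_pos[of 1] by simp
  next
    case False
    define r where "r = a (Suc m) / a m"
    have "(\<Sum>j\<le>m. c j * a (Suc m - j)) + c (Suc m) * a 0 = 0"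
      using convolution[of "Suc m"] by simp
    moreover have "r * (\<Sum>j\<le>m. c j * a (m - j)) = 0"
      using convolution[of m] False by simp
    ultimately have "c (Suc m) * a 0 = (\<Sum>j\<le>m. c j * (r * a (m - j) - a (Suc m - j)))"
      by (simp add: sum_distrib_left sum_subtractf algebra_simps)
    also have "\<dots> \<le> 0"
    proof (rule sum_nonpos)
      fix j assume j: "j \<in> {..m}"
      show "c j * (r * a (m - j) - a (Suc m - j)) \<le> 0"
      proof (cases "j = 0")
        case True
        then show ?thesis using a_pos[of m] by (simp add: r_def)
      next
        case False
        then have "c j \<le> 0" using less.IH j k by simp
        moreover have "a (Suc (m - j)) / a (m - j) \<le> r"
          unfolding r_def using log_convex by (simp add: incseq_def)
        then have "a (Suc m - j) \<le> r * a (m - j)"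
          using a_pos[of "m - j"] j by (simp add: Suc_diff_le divide_le_eq)
        ultimately show ?thesis by (simp add: mult_nonpos_nonneg)
      qed
    qed
    finally show ?thesis .
  qed
  then show ?case using a_pos[of 0] k by (simp add: mult_le_0_iff)
qed

lemma harm_Suc_reverse: "harm (Suc n) = (\<Sum>j\<le>n. 1 / (real (n - j) + 1))"
proof -
  have "harm (Suc n) = (\<Sum>i\<le>n. 1 / (real i + 1))"
    by (simp add: harm_altdef lessThan_Suc_atMost divide_inverse add.commute)
  also have "\<dots> = (\<Sum>j\<le>n. 1 / (real (n - j) + 1))"
    by (rule sum.reindex_bij_witness[where i="\<lambda>j. n - j" and j="\<lambda>i. n - i"]) auto
  finally show ?thesis .
qed

lemma divide_plus_two_telescope:
  fixes x y :: real
  assumes "y \<ge> 0"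
  shows "x / (y + 2) = x / (y + 1) - x / ((y + 1) * (y + 2))"
proof -
  have "x / (y + 1) - x / (y + 2) = (x * (y + 2) - x * (y + 1)) / ((y + 1) * (y + 2))"
    using assms by (intro diff_frac_eq) auto
  then show ?thesis by (simp add: algebra_simps)
qed

lemma sum_inverse_eq_harm: "(\<Sum>k=1..n. 1 / real k) = (harm n :: real)"
  by (simp add: harm_def divide_inverse)

lemma harm_le_ln_plus_1: "n \<ge> 1 \<Longrightarrow> harm n \<le> ln (real n) + (1 :: real)"
  using euler_mascheroni_sequence_decreasing[of 1 n] by (simp add: harm_def)

lemma harm_mult_le_ln:
  assumes "k \<ge> 1" "s \<ge> 1"
  shows "harm (k * s) \<le> ln (real k) + ln (real s) + (1 :: real)"
  using harm_le_ln_plus_1[of "k * s"] assms by (simp add: ln_mult)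

lemma nat_between_plus_1_plus_2:
  fixes L :: real
  assumes "L \<ge> 0"
  obtains s :: nat where "L + 1 \<le> real s" "real s \<le> L + 2"
proof
  show "L + 1 \<le> real (nat \<lceil>L\<rceil> + 1)" "real (nat \<lceil>L\<rceil> + 1) \<le> L + 2"
    using assms le_of_int_ceiling[of L] of_int_ceiling_le_add_one[of L] by linarith+
qed

locale harmonic_renewal =
  fixes w :: "nat \<Rightarrow> real"
  assumes w_0: "w 0 = 1"
    and w_rec: "\<And>n. n \<ge> 1 \<Longrightarrow> w n = (\<Sum>l=1..n. w (n - l) / (real l * real (l + 1)))"
begin

lemma w_Suc: "w (Suc n) = (\<Sum>j\<le>n. w j / ((real (n - j) + 1) * (real (n - j) + 2)))"
proof -
  have "w (Suc n) = (\<Sum>l=1..Suc n. w (Suc n - l) / (real l * real (l + 1)))"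
    by (rule w_rec) simp
  also have "\<dots> = (\<Sum>j\<le>n. w j / ((real (n - j) + 1) * (real (n - j) + 2)))"
    by (rule sum.reindex_bij_witness[where i="\<lambda>j. Suc n - j" and j="\<lambda>l. Suc n - l"])
       (auto simp: Suc_diff_le)
  finally show ?thesis .
qed

lemma w_nonneg: "w n \<ge> 0"
proof (induction n rule: less_induct)
  case (less n)
  then show ?case
    by (cases n) (auto simp del: of_nat_diff simp: w_0 w_Suc intro!: sum_nonneg divide_nonneg_pos)
qed

lemma harmonic_convolution: "(\<Sum>j\<le>n. w j / (real (n - j) + 1)) = 1"
proof (induction n)
  case 0
  then show ?case by (simp add: w_0)
next
  case (Suc n)
  have "(\<Sum>j\<le>Suc n. w j / (real (Suc n - j) + 1))
      = (\<Sum>j\<le>n. w j / (real (Suc n - j) + 1)) + w (Suc n)"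
    by simp
  also have "(\<Sum>j\<le>n. w j / (real (Suc n - j) + 1)) = (\<Sum>j\<le>n. w j / (real (n - j) + 2))"
    by (intro sum.cong) (auto simp: Suc_diff_le)
  also have "\<dots> = (\<Sum>j\<le>n. w j / (real (n - j) + 1)) - w (Suc n)"
    by (simp del: of_nat_diff add: divide_plus_two_telescope w_Suc sum_subtractf)
  finally show ?case using Suc.IH by simp
qed

lemma w_Suc_le: "w (Suc n) \<le> w n"
proof -
  \<comment> \<open>the differences of w form the convolution inverse of 1/(n+1)\<close>
  define c where "c j = w j - (if j = 0 then 0 else w (j - 1))" for j
  have "c k \<le> 0" if "k \<ge> 1" for k
  proof (rule kaluza[where a="\<lambda>k. 1 / (real k + 1)"])
    show "incseq (\<lambda>n. (1 / (real (Suc n) + 1)) / (1 / (real n + 1)))"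
      by (rule incseq_SucI) (simp add: field_simps)
    show "(\<Sum>j\<le>k. c j * (1 / (real (k - j) + 1))) = 0" if "k \<ge> 1" for k
    proof -
      obtain m where k: "k = Suc m" using \<open>k \<ge> 1\<close> by (cases k) auto
      have "(\<Sum>j\<le>Suc m. (if j = 0 then 0 else w (j - 1)) / (real (Suc m - j) + 1))
          = (\<Sum>j\<le>m. w j / (real (m - j) + 1))"
        by (subst sum.atMost_Suc_shift) simp
      then show ?thesis
        using harmonic_convolution[of k] harmonic_convolution[of m]
        by (simp del: of_nat_diff add: c_def k diff_divide_distrib sum_subtractf)
    qed
  qed (use that in \<open>simp_all add: c_def w_0\<close>)
  from this[of "Suc n"] show ?thesis by (simp add: c_def)
qed

lemma w_antimono: "i \<le> j \<Longrightarrow> w j \<le> w i"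
  using decseq_SucI[of w, OF w_Suc_le] by (simp add: decseq_def)

lemma w_harm_Suc_le: "w n * harm (Suc n) \<le> 1"
proof -
  have "w n * harm (Suc n) = (\<Sum>j\<le>n. w n / (real (n - j) + 1))"
    by (simp add: harm_Suc_reverse sum_distrib_left)
  also have "\<dots> \<le> (\<Sum>j\<le>n. w j / (real (n - j) + 1))"
    by (intro sum_mono divide_right_mono w_antimono) auto
  finally show ?thesis using harmonic_convolution[of n] by simp
qed

lemma w_le_1: "w n \<le> 1"
  using w_antimono[of 0 n] by (simp add: w_0)

lemma w_harm_lower: "1 \<le> real k / (real m + 1) + w k * harm (Suc m)"
proof -
  have split: "{..k + m} = {..<k} \<union> {k..k + m}" by auto
  have "1 = (\<Sum>j\<le>k + m. w j / (real (k + m - j) + 1))"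
    by (rule harmonic_convolution[symmetric])
  also have "\<dots> = (\<Sum>j<k. w j / (real (k + m - j) + 1)) + (\<Sum>j=k..k + m. w j / (real (k + m - j) + 1))"
    unfolding split by (rule sum.union_disjoint) auto
  also have "(\<Sum>j<k. w j / (real (k + m - j) + 1)) \<le> (\<Sum>j<k. 1 / (real m + 1))"
  proof (rule sum_mono)
    fix j assume "j \<in> {..<k}"
    then have "real m + 1 \<le> real (k + m - j) + 1" by simp
    then show "w j / (real (k + m - j) + 1) \<le> 1 / (real m + 1)"
      using w_le_1[of j] w_nonneg[of j] by (intro frac_le) auto
  qed
  also have "(\<Sum>j=k..k + m. w j / (real (k + m - j) + 1)) \<le> (\<Sum>j=k..k + m. w k / (real (k + m - j) + 1))"
    by (intro sum_mono divide_right_mono w_antimono) auto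
  also have "\<dots> = w k * (\<Sum>i\<le>m. 1 / (real (m - i) + 1))"
    unfolding sum_distrib_left
    by (rule sum.reindex_bij_witness[where i="\<lambda>i. i + k" and j="\<lambda>j. j - k"]) auto
  finally show ?thesis by (simp add: harm_Suc_reverse)
qed

lemma w_harm_mult_lower:
  assumes "k \<ge> 1" "s \<ge> 1"
  shows "1 - 1 / real s \<le> w k * harm (k * s)"
proof -
  have "1 \<le> real k / (real (k * s - 1) + 1) + w k * harm (Suc (k * s - 1))"
    by (rule w_harm_lower)
  moreover have "Suc (k * s - 1) = k * s" using assms by simp
  moreover have "real (k * s - 1) + 1 = real k * real s" using assms by (simp add: of_nat_diff)
  moreover have "real k / (real k * real s) = 1 / real s" using assms by simp
  ultimately show ?thesis by simp
qed

lemma w_harm_lower_ln: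
  assumes "k \<ge> 3"
  shows "(1 - 1 / (ln (real k) + 1)) * ln (real k) / (ln (real k) + ln (ln (real k) + 2) + 1)
      \<le> w k * harm k"
proof -
  \<comment> \<open>the loss 1/s and the ratio H_k / H_{ks} both tend to 1 when s grows like ln k\<close>
  define L where "L = ln (real k)"
  have "exp 1 \<le> real k" using exp_le assms by simp
  then have L: "L \<ge> 1" unfolding L_def using assms by (subst ln_ge_iff) auto
  obtain s :: nat where s: "L + 1 \<le> real s" "real s \<le> L + 2"
    using nat_between_plus_1_plus_2[of L] L by auto
  then have "s \<ge> 1" using L by linarith
  have "ln (real s) \<le> ln (L + 2)" using s \<open>s \<ge> 1\<close> by simp
  then have harm_ks: "harm (k * s) \<le> L + ln (L + 2) + 1"
    using harm_mult_le_ln[of k s] assms \<open>s \<ge> 1\<close> unfolding L_def by simp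
  have harm_k: "L \<le> harm k"
  proof -
    have "L \<le> ln (real k + 1)" unfolding L_def using assms by simp
    then show ?thesis using harm_ge_ln[of k] by linarith
  qed
  have harm_ks_pos: "harm (k * s) > (0 :: real)" using assms \<open>s \<ge> 1\<close> by simp
  have "(1 - 1 / (L + 1)) * L / (L + ln (L + 2) + 1) \<le> (1 - 1 / real s) * (harm k / harm (k * s))"
  proof -
    have "L / (L + ln (L + 2) + 1) \<le> harm k / harm (k * s)"
      using harm_k harm_ks harm_ks_pos L by (intro frac_le) auto
    moreover have "0 \<le> 1 - 1 / (L + 1)" "1 - 1 / (L + 1) \<le> 1 - 1 / real s"
      using L s by (auto simp: field_simps)
    moreover have "0 \<le> L / (L + ln (L + 2) + 1)" using L by simp
    ultimately have "(1 - 1 / (L + 1)) * (L / (L + ln (L + 2) + 1)) \<le> (1 - 1 / real s) * (harm k / harm (k * s))"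
      by (intro mult_mono) auto
    then show ?thesis by simp
  qed
  also have "\<dots> \<le> w k * harm (k * s) * (harm k / harm (k * s))"
    using w_harm_mult_lower[OF _ \<open>s \<ge> 1\<close>] assms harm_k L harm_ks_pos
    by (intro mult_right_mono divide_nonneg_pos) auto
  also have "\<dots> = w k * harm k" using harm_ks_pos by (simp del: harm_pos_iff)
  finally show ?thesis unfolding L_def .
qed

lemma w_harm_tendsto_1: "(\<lambda>n. w n * harm n) \<longlonglongrightarrow> 1"
proof (rule tendsto_sandwich)
  let ?l = "\<lambda>x::real. (1 - 1 / (ln x + 1)) * ln x / (ln x + ln (ln x + 2) + 1)"
  show "\<forall>\<^sub>F n in sequentially. ?l (real n) \<le> w n * harm n"
    using eventually_ge_at_top[of 3] by eventually_elim (rule w_harm_lower_ln)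
  show "\<forall>\<^sub>F n in sequentially. w n * harm n \<le> 1"
  proof (intro always_eventually allI)
    fix n
    have "w n * harm n \<le> w n * harm (Suc n)" using w_nonneg by (intro mult_left_mono harm_mono) auto
    then show "w n * harm n \<le> 1" using w_harm_Suc_le[of n] by simp
  qed
  have "(?l \<longlongrightarrow> 1) at_top" by real_asymp
  then show "(\<lambda>n. ?l (real n)) \<longlonglongrightarrow> 1"
    using filterlim_compose filterlim_real_sequentially by blast
qed simp

end

lemma abs_diff_le_telescope:
  fixes f g :: "nat \<Rightarrow> real"
  assumes "\<And>n. n \<ge> N \<Longrightarrow> \<bar>f (Suc n) - f n\<bar> \<le> g (Suc n) - g n" and "n \<ge> N"
  shows "\<bar>f n - f N\<bar> \<le> g n - g N"
  using \<open>n \<ge> N\<close>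
proof (induction n rule: dec_induct)
  case base
  then show ?case by simp
next
  case (step n)
  then show ?case using assms(1)[of n] by linarith
qed

lemma stolz_cesaro:
  fixes a b :: "nat \<Rightarrow> real"
  assumes b_strict: "\<And>n. b n < b (Suc n)"
    and b_lim: "filterlim b at_top sequentially"
    and ratio: "(\<lambda>n. (a (Suc n) - a n) / (b (Suc n) - b n)) \<longlonglongrightarrow> L"
  shows "(\<lambda>n. a n / b n) \<longlonglongrightarrow> L"
proof (rule tendstoI)
  fix \<epsilon> :: real assume "\<epsilon> > 0"
  define e where "e = \<epsilon> / 2"
  have "e > 0" using \<open>\<epsilon> > 0\<close> by (simp add: e_def)
  have "eventually (\<lambda>n. dist ((a (Suc n) - a n) / (b (Suc n) - b n)) L < e \<and> b n \<ge> 0) sequentially"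
    using tendstoD[OF ratio \<open>e > 0\<close>] b_lim[unfolded filterlim_at_top, rule_format, of 0]
    by (rule eventually_conj)
  then obtain N where N: "\<And>n. n \<ge> N \<Longrightarrow> dist ((a (Suc n) - a n) / (b (Suc n) - b n)) L < e"
    and "b N \<ge> 0"
    unfolding eventually_sequentially by blast
  have "\<bar>(a (Suc n) - L * b (Suc n)) - (a n - L * b n)\<bar> \<le> e * b (Suc n) - e * b n" if "n \<ge> N" for n
  proof -
    have pos: "b (Suc n) - b n > 0" using b_strict[of n] by simp
    have "\<bar>(a (Suc n) - a n) / (b (Suc n) - b n) - L\<bar> \<le> e"
      using N[OF that] by (simp add: dist_real_def)
    then have "\<bar>(a (Suc n) - a n) - L * (b (Suc n) - b n)\<bar> \<le> e * (b (Suc n) - b n)"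
      using pos by (simp add: abs_le_iff field_simps)
    then show ?thesis by (simp add: algebra_simps)
  qed
  then have telescoped: "\<bar>(a n - L * b n) - (a N - L * b N)\<bar> \<le> e * b n - e * b N" if "n \<ge> N" for n
    using abs_diff_le_telescope[of N "\<lambda>n. a n - L * b n" "\<lambda>n. e * b n"] that by blast
  define C where "C = \<bar>a N - L * b N\<bar>"
  have "eventually (\<lambda>n. b n > C / e) sequentially"
    using b_lim by (simp add: filterlim_at_top_dense)
  then show "eventually (\<lambda>n. dist (a n / b n) L < \<epsilon>) sequentially"
    using eventually_ge_at_top[of N]
  proof eventually_elim
    case (elim n)
    then have C: "C < e * b n" using \<open>e > 0\<close> by (simp add: field_simps)
    moreover have "0 \<le> C" by (simp add: C_def)
    ultimately have bn: "b n > 0" "C < e * b n"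
      using \<open>e > 0\<close> zero_less_mult_pos[of e "b n"] by auto
    have "e * b N \<ge> 0" using \<open>b N \<ge> 0\<close> \<open>e > 0\<close> by simp
    then have "\<bar>a n - L * b n\<bar> \<le> e * b n + C"
      using telescoped[OF elim(2)] unfolding C_def by arith
    then have "\<bar>a n - L * b n\<bar> < \<epsilon> * b n" using bn by (simp add: e_def)
    then show ?case using bn by (simp add: dist_real_def abs_div field_simps)
  qed
qed

lemma harm_ge_1: "n \<ge> 1 \<Longrightarrow> harm n \<ge> (1 :: real)"
  using harm_mono[of 1 n] by (simp add: harm_def)

lemma n_div_harm_diff:
  assumes "n \<ge> 1"
  shows "real (Suc n) / harm (Suc n) - real n / harm n
       = (harm n - real n / real (Suc n)) / (harm n * harm (Suc n) :: real)"
proof -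
  have H: "harm (Suc n) = harm n + 1 / real (Suc n)" by (simp add: harm_Suc divide_inverse)
  have "harm n > (0 :: real)" "harm (Suc n) > (0 :: real)" using assms by simp_all
  then have "harm (Suc n) \<noteq> (0 :: real)" "harm n \<noteq> (0 :: real)" by linarith+
  then have "real (Suc n) / harm (Suc n) - real n / harm n
      = (real (Suc n) * harm n - real n * harm (Suc n)) / (harm (Suc n) * harm n :: real)"
    by (rule diff_frac_eq)
  also have "real (Suc n) * harm n - real n * harm (Suc n) = harm n - real n / real (Suc n)"
    unfolding H by (simp add: algebra_simps)
  finally show ?thesis by (simp add: mult.commute)
qed

lemma n_div_harm_strict_mono: "real n / harm n < real (Suc n) / (harm (Suc n) :: real)"
proof (cases "n = 0")
  case True
  then show ?thesis by (simp add: harm_def)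
next
  case False
  have "harm n \<ge> (1 :: real)" using False by (simp add: harm_ge_1)
  moreover have "real n / real (Suc n) < 1" by simp
  ultimately have "harm n - real n / real (Suc n) > (0 :: real)" by linarith
  moreover have "harm n * harm (Suc n) > (0 :: real)" using False by simp
  ultimately have "0 < (harm n - real n / real (Suc n)) / (harm n * harm (Suc n) :: real)"
    by (rule divide_pos_pos)
  then show ?thesis using n_div_harm_diff[of n] False by simp
qed

lemma n_div_harm_at_top: "filterlim (\<lambda>n. real n / harm n :: real) at_top sequentially"
proof (rule filterlim_at_top_mono)
  have "filterlim (\<lambda>x::real. x / (ln x + 1)) at_top at_top" by real_asymp
  then show "filterlim (\<lambda>n. real n / (ln (real n) + 1)) at_top sequentially"
    using filterlim_compose filterlim_real_sequentially by blast
  show "\<forall>\<^sub>F n in sequentially. real n / (ln (real n) + 1) \<le> real n / harm n"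
    using eventually_ge_at_top[of 1]
  proof eventually_elim
    case (elim n)
    have "ln (real n) \<ge> 0" using elim by simp
    then have "ln (real n) + 1 > 0" by linarith
    with elim show ?case
      by (intro divide_left_mono[OF harm_le_ln_plus_1[OF elim]] mult_pos_pos) simp_all
  qed
qed

lemma harm_asymp_equiv_ln: "harm \<sim>[at_top] (\<lambda>n. ln (real n) :: real)"
proof (rule asymp_equivI')
  have "filterlim (\<lambda>n. ln (real n)) at_top sequentially"
    using filterlim_compose[OF ln_at_top filterlim_real_sequentially] .
  then have "(\<lambda>n. (harm n - ln (real n)) / ln (real n) :: real) \<longlonglongrightarrow> 0"
    by (intro tendsto_divide_0[OF euler_mascheroni_LIMSEQ] filterlim_at_top_imp_at_infinity)
  then have "(\<lambda>n. 1 + (harm n - ln (real n)) / ln (real n) :: real) \<longlonglongrightarrow> 1"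
    using tendsto_add[OF tendsto_const[of 1]] by fastforce
  moreover have "\<forall>\<^sub>F n in sequentially. 1 + (harm n - ln (real n)) / ln (real n) = harm n / ln (real n)"
    using eventually_ge_at_top[of 2] by eventually_elim (simp add: field_simps)
  ultimately show "(\<lambda>n. harm n / ln (real n) :: real) \<longlonglongrightarrow> 1"
    by (rule Lim_transform_eventually)
qed

context harmonic_renewal
begin

lemma sum_w_asymp_equiv: "(\<lambda>n. \<Sum>k=1..n. w k) \<sim>[at_top] (\<lambda>n. real n / harm n)"
proof (rule asymp_equivI', rule stolz_cesaro[OF n_div_harm_strict_mono n_div_harm_at_top])
  let ?q = "\<lambda>n. real n / real (Suc n) * inverse (harm n)"
  have "?q \<longlonglongrightarrow> 1 * 0"
    by (intro tendsto_mult LIMSEQ_n_over_Suc_n tendsto_inverse_0_at_top harm_at_top)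
  then have "(\<lambda>n. w (Suc n) * harm (Suc n) / (1 - ?q n)) \<longlonglongrightarrow> 1 / (1 - 0)"
    by (intro tendsto_divide tendsto_diff tendsto_const LIMSEQ_Suc[OF w_harm_tendsto_1]) auto
  moreover have "\<forall>\<^sub>F n in sequentially. w (Suc n) * harm (Suc n) / (1 - ?q n)
      = ((\<Sum>k=1..Suc n. w k) - (\<Sum>k=1..n. w k)) / (real (Suc n) / harm (Suc n) - real n / harm n)"
    using eventually_ge_at_top[of 1]
  proof eventually_elim
    case (elim n)
    define H :: real where "H = harm n"
    define q :: real where "q = real n / real (Suc n)"
    have "H \<ge> 1" unfolding H_def using harm_ge_1[OF elim] .
    then have "H \<noteq> 0" by linarith
    then have lhs: "1 - q * inverse H = (H - q) / H"
      by (simp add: divide_inverse left_diff_distrib)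
    have rhs: "real (Suc n) / harm (Suc n) - real n / H = (H - q) / (H * harm (Suc n))"
      using n_div_harm_diff[OF elim] by (simp only: H_def q_def)
    have sum: "(\<Sum>k=1..Suc n. w k) - (\<Sum>k=1..n. w k) = w (Suc n)" by simp
    show ?case
      unfolding q_def[symmetric] H_def[symmetric] lhs rhs sum by (simp add: ac_simps)
  qed
  ultimately show "(\<lambda>n. ((\<Sum>k=1..Suc n. w k) - (\<Sum>k=1..n. w k)) / (real (Suc n) / harm (Suc n) - real n / harm n)) \<longlonglongrightarrow> 1"
    by (simp add: Lim_transform_eventually)
qed

lemma w_asymp_equiv: "w \<sim>[at_top] (\<lambda>n. 1 / harm n)"
proof (rule asymp_equivI')
  have "\<forall>\<^sub>F n in sequentially. w n * harm n = w n / (1 / harm n)" by simp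
  then show "(\<lambda>n. w n / (1 / harm n)) \<longlonglongrightarrow> 1"
    by (rule Lim_transform_eventually[OF w_harm_tendsto_1])
qed

end

lemma harmonic_renewal_unique:
  assumes "harmonic_renewal w" and "harmonic_renewal v"
  shows "w n = v n"
proof (induction n rule: less_induct)
  case (less n)
  show ?case
  proof (cases "n = 0")
    case True
    then show ?thesis using assms by (simp add: harmonic_renewal.w_0)
  next
    case False
    then have "(\<Sum>l=1..n. w (n - l) / (real l * real (l + 1))) = (\<Sum>l=1..n. v (n - l) / (real l * real (l + 1)))"
      using less.IH by (intro sum.cong) auto
    then show ?thesis using assms False by (simp add: harmonic_renewal.w_rec)
  qed
qed

lemma (in harmonic_lueroth) harmonic_renewal_measure:
  "harmonic_renewal (\<lambda>n. measure lborel (ext_sum_level T D n))"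
proof
  show "measure lborel (ext_sum_level T D 0) = 1" by (simp add: ext_sum_level_def)
qed (rule measure_ext_sum_level)

sublocale harmonic_lueroth \<subseteq> harmonic_renewal "\<lambda>n. measure lborel (ext_sum_level T D n)"
  by (rule harmonic_renewal_measure)

section \<open>The classical and the alternating Lueroth maps\<close>

lemma harm_interval_iff:
  assumes "j \<ge> 1"
  shows "x \<in> harm_interval j \<longleftrightarrow> real j * real (j + 1) * x - real j \<in> {0..1}"
proof -
  have j: "real j > 0" using assms by simp
  have "1 / real (j + 1) \<le> x \<longleftrightarrow> real j * 1 \<le> real j * (real (j + 1) * x)"
    using j by (simp only: mult_le_cancel_left_pos) (simp add: divide_le_eq mult.commute)
  moreover have "x \<le> 1 / real j \<longleftrightarrow> real (j + 1) * (real j * x) \<le> real (j + 1) * 1"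
    using j by (simp only: mult_le_cancel_left_pos) (simp add: le_divide_eq mult.commute)
  ultimately show ?thesis by (auto simp: harm_interval_def algebra_simps)
qed

lemma inverse_nat_le_inverse_Suc: "i < j \<Longrightarrow> 1 / real j \<le> 1 / real (i + 1)"
  by (simp add: frac_le)

lemma harmA_disjoint: "i \<ge> 1 \<Longrightarrow> j \<ge> 1 \<Longrightarrow> i \<noteq> j \<Longrightarrow> harmA i \<inter> harmA j = {}"
  using inverse_nat_le_inverse_Suc[of i j] inverse_nat_le_inverse_Suc[of j i]
  by (fastforce simp: harmA_def linorder_neq_iff)

lemma lurB_disjoint:
  assumes "i \<ge> 1" "j \<ge> 1" "i \<noteq> j"
  shows "lurB i \<inter> lurB j = {}"
proof -
  have "lurB i \<inter> lurB j = {}" if "1 \<le> i" "i < j" for i j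
  proof -
    have "x < 1 / real (i + 1)" if "x \<in> lurB j" for x
      using that inverse_nat_le_inverse_Suc[OF \<open>i < j\<close>] \<open>1 \<le> i\<close> \<open>i < j\<close> by (auto simp: lurB_def)
    moreover have "1 / real (i + 1) \<le> y" if "y \<in> lurB i" for y
      using that by (auto simp: lurB_def split: if_splits)
    ultimately show ?thesis by fastforce
  qed
  then show ?thesis using assms by (metis Int_commute linorder_neq_iff)
qed

lemma alt_digit_eq: "j \<ge> 1 \<Longrightarrow> x \<in> harmA j \<Longrightarrow> alt_digit x = j"
  unfolding alt_digit_def using harmA_disjoint by blast

lemma lur_digit_eq: "j \<ge> 1 \<Longrightarrow> x \<in> lurB j \<Longrightarrow> lur_digit x = j"
  unfolding lur_digit_def using lurB_disjoint by blast

interpretation alt: harmonic_lueroth alt_luroth harmA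
proof
  fix i j :: nat assume j: "j \<ge> 1"
  show "harmA j \<subseteq> harm_interval j" "harm_interval j - harmA j \<subseteq> {1 / real (j + 1), 1 / real j}"
    by (auto simp: harmA_def harm_interval_def)
  show "i \<ge> 1 \<Longrightarrow> i \<noteq> j \<Longrightarrow> harmA i \<inter> harmA j = {}" using harmA_disjoint j by blast
  have "alt_luroth x = real (j + 1) + - (real j * real (j + 1)) * x" if "x \<in> harmA j" for x
  proof -
    have "x > 0" using that by (auto simp: harmA_def intro: le_less_trans[rotated])
    then show ?thesis using alt_digit_eq[OF j that] by (simp add: alt_luroth_def)
  qed
  moreover have "{x. real (j + 1) + - (real j * real (j + 1)) * x \<in> {0..1}} = harm_interval j"
    using harm_interval_iff[OF j] by (auto simp: algebra_simps)
  ultimately show "\<exists>a b. \<bar>a\<bar> = real j * real (j + 1) \<and> (\<forall>x \<in> harmA j. alt_luroth x = b + a * x)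
      \<and> {x. b + a * x \<in> {0..1}} = harm_interval j"
    by (intro exI[of _ "- (real j * real (j + 1))"] exI[of _ "real (j + 1)"]) auto
qed

interpretation lur: harmonic_lueroth luroth lurB
proof
  fix i j :: nat assume j: "j \<ge> 1"
  show "lurB j \<subseteq> harm_interval j" "harm_interval j - lurB j \<subseteq> {1 / real (j + 1), 1 / real j}"
    by (auto simp: lurB_def harm_interval_def)
  show "i \<ge> 1 \<Longrightarrow> i \<noteq> j \<Longrightarrow> lurB i \<inter> lurB j = {}" using lurB_disjoint j by blast
  have "luroth x = - real j + real j * real (j + 1) * x" if "x \<in> lurB j" for x
  proof -
    have "x > 0" using that by (auto simp: lurB_def split: if_splits intro: less_le_trans[rotated])
    then show ?thesis using lur_digit_eq[OF j that] by (simp add: luroth_def)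
  qed
  moreover have "{x. - real j + real j * real (j + 1) * x \<in> {0..1}} = harm_interval j"
    using harm_interval_iff[OF j] by auto
  ultimately show "\<exists>a b. \<bar>a\<bar> = real j * real (j + 1) \<and> (\<forall>x \<in> lurB j. luroth x = b + a * x)
      \<and> {x. b + a * x \<in> {0..1}} = harm_interval j"
    by (intro exI[of _ "real j * real (j + 1)"] exI[of _ "- real j"]) auto
qed

theorem corollary5p2:
  shows "((\<forall>n. (\<Sum>k=1..n. measure lborel (lur_level k)) = (\<Sum>k=1..n. measure lborel (alt_level k)))
          \<and> (\<lambda>n. \<Sum>k=1..n. measure lborel (lur_level k))
              \<sim>[at_top] (\<lambda>n. real n / (\<Sum>k=1..n. 1 / real k))
          \<and> (\<lambda>n. real n / (\<Sum>k=1..n. 1 / real k)) \<sim>[at_top] (\<lambda>n. real n / ln (real n)))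
       \<and> ((\<forall>n. measure lborel (lur_level n) = measure lborel (alt_level n))
          \<and> (\<lambda>n. measure lborel (lur_level n)) \<sim>[at_top] (\<lambda>n. 1 / (\<Sum>k=1..n. 1 / real k))
          \<and> (\<lambda>n. 1 / (\<Sum>k=1..n. 1 / real k)) \<sim>[at_top] (\<lambda>n. 1 / ln (real n)))"
proof -
  let ?w = "\<lambda>n. measure lborel (ext_sum_level luroth lurB n)"
  have "measure lborel (ext_sum_level alt_luroth harmA n) = ?w n" for n
    using alt.harmonic_renewal_measure lur.harmonic_renewal_measure by (rule harmonic_renewal_unique)
  then have levels_eq: "measure lborel (lur_level n) = measure lborel (alt_level n)" for n
    by (simp add: measure_sum_level)
  have sums: "(\<Sum>k=1..n. measure lborel (lur_level k)) = (\<Sum>k=1..n. ?w k)" for n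
    by (intro sum.cong) (simp_all add: measure_sum_level)
  have "\<forall>\<^sub>F n in at_top. ?w n = measure lborel (lur_level n)"
    using eventually_ge_at_top[of 1] by eventually_elim (simp add: measure_sum_level)
  then have "(\<lambda>n. measure lborel (lur_level n)) \<sim>[at_top] (\<lambda>n. 1 / harm n)"
    by (rule asymp_equiv_transfer[OF lur.w_asymp_equiv]) simp
  moreover have "(\<lambda>n. \<Sum>k=1..n. measure lborel (lur_level k)) \<sim>[at_top] (\<lambda>n. real n / harm n)"
    unfolding sums by (rule lur.sum_w_asymp_equiv)
  ultimately show ?thesis
    unfolding sum_inverse_eq_harm
    by (intro conjI allI sum.cong refl levels_eq asymp_equiv_divide asymp_equiv_refl harm_asymp_equiv_ln)
qed

end
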